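(* Let $T\in\mathcal L(\mathcal P_n)$, $T\ne0$, and suppose there is a constant $C>0$ such that for each nonconstant $f\in\mathcal P_n$ there exist $u\in Z(f)$ and $v\in Z(Tf)$ with $|u-v|\le C$. Then $$T=a_0I+a_1D+\cdots+a_nD^n,\qquad\text{where } a_k=(T\phi_k)(0)\ (k=0,\dots,n)\ \text{and}\ a_0\neq0.$$
   Context: Let $n\ge 1$ be an integer and $\mathcal P_n$ the complex vector space of polynomials in one complex variable of degree at most $n$; $\mathcal L(\mathcal P_n)$ is the set of linear operators $\mathcal P_n\to\mathcal P_n$; $\phi_k(z)=z^k/k!$; $D$ is differentiation on $\mathcal P_n$ and $I$ the identity. For a nonzero $f$, $Z(f)$ is the multiset of roots of $f$ (with multiplicity; empty for nonzero constants); $Z(0)=\mathbb C$. *)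

theory Defs
  imports "HOL-Computational_Algebra.Polynomial"
begin

definition Pn :: "nat \<Rightarrow> complex poly set" where
  "Pn n = {p. degree p \<le> n}"

text \<open>T is a linear operator P_n to P_n (its values outside P_n are irrelevant).\<close>
definition lin_op_Pn :: "nat \<Rightarrow> (complex poly \<Rightarrow> complex poly) \<Rightarrow> bool" where
  "lin_op_Pn n T \<longleftrightarrow>
     (\<forall>p\<in>Pn n. T p \<in> Pn n) \<and>
     (\<forall>p\<in>Pn n. \<forall>q\<in>Pn n. T (p + q) = T p + T q) \<and>
     (\<forall>c. \<forall>p\<in>Pn n. T (smult c p) = smult c (T p))"

definition Zset :: "complex poly \<Rightarrow> complex set" where
  "Zset f = (if f = 0 then UNIV else {z. poly f z = 0})"

definition phi :: "nat \<Rightarrow> complex poly" where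
  "phi k = monom (1 / of_nat (fact k)) k"

end

theory Submission
  imports Defs
begin

text \<open>
  Every linear operator on \<open>P\<^sub>n\<close> is a differential operator \<open>\<Sum>k\<le>n. Q\<^sub>k D\<^sup>k\<close> with
  polynomial coefficients \<open>Q\<^sub>k\<close>. Among the nonzero \<open>Q\<^sub>k\<close> of maximal degree let \<open>Q\<^sub>m\<close>
  be the one of least index. If \<open>m > 0\<close>, apply \<open>T\<close> to \<open>f = (z - w)\<^sup>m / m!\<close>, whose only
  zero is \<open>w\<close>: then \<open>T f = Q\<^sub>m + \<Sum>k<m. Q\<^sub>k (z - w)\<^bsup>m-k\<^esup> / (m-k)!\<close>, and for \<open>|w|\<close> large the
  term \<open>Q\<^sub>m\<close> dominates on the disc \<open>|z - w| \<le> C\<close>, so \<open>T f\<close> has no zero near \<open>w\<close>.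
  Hence \<open>m = 0\<close>, and then \<open>T \<phi>\<^sub>n\<close> has degree \<open>deg Q\<^sub>0 + n\<close>, which forces all \<open>Q\<^sub>k\<close> to
  be constants, namely \<open>Q\<^sub>k(0) = (T \<phi>\<^sub>k)(0)\<close>.
\<close>

lemma Pn_smult: "p \<in> Pn n \<Longrightarrow> smult c p \<in> Pn n"
  by (auto simp: Pn_def)

lemma Pn_sum: "(\<And>i. i \<in> A \<Longrightarrow> p i \<in> Pn n) \<Longrightarrow> sum p A \<in> Pn n"
  by (induction A rule: infinite_finite_induct) (auto simp: Pn_def intro: degree_add_le)

lemma smult_sum_right: "smult c (sum f A) = (\<Sum>i\<in>A. smult c (f i))"
  by (induction A rule: infinite_finite_induct) (simp_all add: smult_add_right)

lemma lin_op_Pn_zero: "lin_op_Pn n T \<Longrightarrow> T 0 = 0"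
  unfolding lin_op_Pn_def by (metis Pn_sum sum.empty smult_0_left)

lemma lin_op_Pn_sum:
  assumes "lin_op_Pn n T" "\<And>i. i \<in> A \<Longrightarrow> p i \<in> Pn n"
  shows "T (\<Sum>i\<in>A. smult (c i) (p i)) = (\<Sum>i\<in>A. smult (c i) (T (p i)))"
  using assms(2)
proof (induction A rule: infinite_finite_induct)
  case (insert x F)
  then have "smult (c x) (p x) \<in> Pn n" "(\<Sum>i\<in>F. smult (c i) (p i)) \<in> Pn n"
    by (auto intro: Pn_smult Pn_sum)
  with insert assms(1) show ?case
    unfolding lin_op_Pn_def by simp
qed (simp_all add: lin_op_Pn_zero[OF assms(1)])

lemma Pn_eq_sum_phi:
  assumes "p \<in> Pn n"
  shows "p = (\<Sum>m\<le>n. smult (coeff p m * fact m) (phi m))"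
proof -
  have "p = (\<Sum>m\<le>n. monom (coeff p m) m)"
    using assms by (simp add: Pn_def poly_as_sum_of_monoms')
  then show ?thesis
    by (simp add: phi_def smult_monom)
qed

definition divided_power :: "'a::field_char_0 \<Rightarrow> nat \<Rightarrow> 'a poly" where
  "divided_power a m = smult (1 / fact m) ([:- a, 1:] ^ m)"

lemma phi_eq_divided_power: "phi m = divided_power 0 m"
  by (simp add: phi_def divided_power_def monom_altdef)

lemma divided_power_0 [simp]: "divided_power a 0 = 1"
  by (simp add: divided_power_def)

lemma poly_divided_power: "poly (divided_power a m) x = (x - a) ^ m / fact m"
  by (simp add: divided_power_def poly_power)

lemma degree_divided_power: "degree (divided_power a m) = m"
  by (simp add: divided_power_def degree_linear_power)

lemma pderiv_divided_power_Suc: "pderiv (divided_power a (Suc m)) = divided_power a m"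
proof -
  have "pderiv ([:- a, 1:] ^ Suc m) = smult (of_nat (Suc m)) ([:- a, 1:] ^ m)"
    by (simp only: pderiv_power_Suc) (simp add: pderiv_pCons)
  then show ?thesis
    by (simp add: divided_power_def pderiv_smult del: of_nat_Suc)
qed

lemma higher_pderiv_divided_power:
  "(pderiv ^^ k) (divided_power a m) = (if k \<le> m then divided_power a (m - k) else 0)"
proof (induction k arbitrary: m)
  case (Suc k)
  then show ?case
    by (cases m) (simp_all del: funpow.simps add: funpow_Suc_right pderiv_divided_power_Suc)
qed simp

lemma Zset_divided_power:
  assumes "m \<ge> 1"
  shows "Zset (divided_power a m) = {a}"
proof -
  have "divided_power a m \<noteq> 0"
    using degree_divided_power[of a m] assms by auto
  then show ?thesis
    using assms by (auto simp: Zset_def poly_divided_power)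
qed

text \<open>
  The coefficients \<open>Q\<^sub>k\<close> of \<open>T\<close> as a differential operator \<open>\<Sum>k. Q\<^sub>k D\<^sup>k\<close>: since
  \<open>D\<^sup>k \<phi>\<^sub>m = \<phi>\<^bsub>m-k\<^esub>\<close>, they must solve the triangular system
  \<open>T \<phi>\<^sub>m = \<Sum>k\<le>m. Q\<^sub>k \<phi>\<^bsub>m-k\<^esub>\<close> with \<open>\<phi>\<^sub>0 = 1\<close>.
\<close>
fun diff_coeff :: "(complex poly \<Rightarrow> complex poly) \<Rightarrow> nat \<Rightarrow> complex poly" where
  "diff_coeff T m = T (phi m) - (\<Sum>k<m. diff_coeff T k * phi (m - k))"

declare diff_coeff.simps [simp del]

lemma sum_diff_coeff_mult_phi: "(\<Sum>k\<le>m. diff_coeff T k * phi (m - k)) = T (phi m)"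
  by (simp add: lessThan_Suc_atMost [symmetric] diff_coeff.simps [of T m] phi_eq_divided_power)

lemma poly_diff_coeff_0: "poly (diff_coeff T m) 0 = poly (T (phi m)) 0"
  by (subst diff_coeff.simps) (auto simp: poly_sum phi_def poly_monom intro!: sum.neutral)

lemma sum_mult_higher_pderiv_divided_power:
  assumes "m \<le> n"
  shows "(\<Sum>k\<le>n. Q k * (pderiv ^^ k) (divided_power a m)) = (\<Sum>k\<le>m. Q k * divided_power a (m - k))"
proof -
  have "(\<Sum>k\<le>n. Q k * (pderiv ^^ k) (divided_power a m))
      = (\<Sum>k\<le>n. if k \<in> {..m} then Q k * divided_power a (m - k) else 0)"
    by (intro sum.cong) (auto simp: higher_pderiv_divided_power)
  also have "\<dots> = (\<Sum>k\<in>{..n} \<inter> {..m}. Q k * divided_power a (m - k))"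
    by (rule sum.inter_restrict [symmetric]) simp
  also have "{..n} \<inter> {..m} = {..m}"
    using assms by auto
  finally show ?thesis .
qed

lemma lin_op_Pn_eq_diff_op:
  assumes T: "lin_op_Pn n T" and p: "p \<in> Pn n"
  shows "T p = (\<Sum>k\<le>n. diff_coeff T k * (pderiv ^^ k) p)"
proof -
  define c where "c m = coeff p m * fact m" for m
  have T_phi: "T (phi m) = (\<Sum>k\<le>n. diff_coeff T k * (pderiv ^^ k) (phi m))" if "m \<le> n" for m
    using sum_diff_coeff_mult_phi[of T m]
    by (simp add: phi_eq_divided_power sum_mult_higher_pderiv_divided_power[OF that])
  have "T p = (\<Sum>m\<le>n. smult (c m) (T (phi m)))"
    unfolding c_def by (subst Pn_eq_sum_phi[OF p], rule lin_op_Pn_sum[OF T])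
      (simp add: Pn_def phi_eq_divided_power degree_divided_power)
  also have "\<dots> = (\<Sum>m\<le>n. smult (c m) (\<Sum>k\<le>n. diff_coeff T k * (pderiv ^^ k) (phi m)))"
    by (intro sum.cong refl) (simp add: T_phi)
  also have "\<dots> = (\<Sum>m\<le>n. \<Sum>k\<le>n. diff_coeff T k * smult (c m) ((pderiv ^^ k) (phi m)))"
    by (simp only: smult_sum_right mult_smult_right)
  also have "\<dots> = (\<Sum>k\<le>n. \<Sum>m\<le>n. diff_coeff T k * smult (c m) ((pderiv ^^ k) (phi m)))"
    by (rule sum.swap)
  also have "\<dots> = (\<Sum>k\<le>n. diff_coeff T k * (pderiv ^^ k) (\<Sum>m\<le>n. smult (c m) (phi m)))"
    by (simp only: sum_distrib_left higher_pderiv_sum higher_pderiv_smult)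
  also have "\<dots> = (\<Sum>k\<le>n. diff_coeff T k * (pderiv ^^ k) p)"
    unfolding c_def by (simp flip: Pn_eq_sum_phi[OF p])
  finally show ?thesis .
qed

lemma eventually_poly_nonzero_at_infinity:
  fixes p :: "'a::real_normed_field poly"
  assumes "p \<noteq> 0"
  shows "\<forall>\<^sub>F x in at_infinity. poly p x \<noteq> 0"
proof -
  have "bdd_above (norm ` {x. poly p x = 0})"
    using poly_roots_finite[OF assms] by (intro bdd_above_finite) simp
  then obtain B where "\<And>x. poly p x = 0 \<Longrightarrow> norm x \<le> B"
    unfolding bdd_above_def by blast
  then show ?thesis
    by (intro eventually_at_infinityI[of "B + 1"]) fastforce
qed

lemma eventually_norm_poly_le_at_infinity:
  fixes P Q :: "'a::real_normed_field poly"
  assumes "degree Q < degree P \<or> Q = 0" and "e > 0"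
  shows "\<forall>\<^sub>F x in at_infinity. norm (poly Q x) \<le> e * norm (poly P x)"
  using assms(1)
proof
  assume deg: "degree Q < degree P"
  then have "((\<lambda>x. poly Q x / poly P x) \<longlongrightarrow> 0) at_infinity"
    by (rule poly_divide_tendsto_0_at_infinity)
  then have "\<forall>\<^sub>F x in at_infinity. norm (poly Q x / poly P x) < e"
    using \<open>e > 0\<close> by (auto simp: tendsto_iff)
  moreover have "\<forall>\<^sub>F x in at_infinity. poly P x \<noteq> 0"
    using deg by (intro eventually_poly_nonzero_at_infinity) auto
  ultimately show ?thesis
    by eventually_elim (simp add: norm_divide divide_less_eq)
qed (use \<open>e > 0\<close> in simp)

lemma exists_root_free_disc:
  fixes P :: "nat \<Rightarrow> complex poly" and C :: real
  assumes lead: "P m \<noteq> 0" and lower: "\<forall>k<m. degree (P k) < degree (P m) \<or> P k = 0"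
  obtains w where "\<forall>s. cmod (s - w) \<le> C \<longrightarrow> poly (\<Sum>k\<le>m. P k * divided_power w (m - k)) s \<noteq> 0"
proof -
  define B where "B = (\<Sum>k<m. \<bar>C\<bar> ^ (m - k) / fact (m - k))"
  define e where "e = 1 / (B + 1)"
  have "B \<ge> 0"
    unfolding B_def by (intro sum_nonneg) simp
  then have "e > 0" "e * B < 1"
    unfolding e_def by (simp_all add: field_simps)
  have "\<forall>\<^sub>F s in at_infinity. (\<forall>k\<in>{..<m}. cmod (poly (P k) s) \<le> e * cmod (poly (P m) s))
      \<and> poly (P m) s \<noteq> 0"
    using lower \<open>e > 0\<close> lead
    by (intro eventually_conj eventually_ball_finite ballI eventually_norm_poly_le_at_infinity
        eventually_poly_nonzero_at_infinity) auto
  then obtain R where R: "\<And>s. R \<le> cmod s \<Longrightarrow>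
      (\<forall>k\<in>{..<m}. cmod (poly (P k) s) \<le> e * cmod (poly (P m) s)) \<and> poly (P m) s \<noteq> 0"
    unfolding eventually_at_infinity by blast
  define w where "w = complex_of_real (\<bar>R\<bar> + \<bar>C\<bar>)"
  have "poly (\<Sum>k\<le>m. P k * divided_power w (m - k)) s \<noteq> 0" if s: "cmod (s - w) \<le> C" for s
  proof
    assume root: "poly (\<Sum>k\<le>m. P k * divided_power w (m - k)) s = 0"
    have "cmod w = \<bar>R\<bar> + \<bar>C\<bar>"
      unfolding w_def norm_of_real by simp
    moreover have "cmod w \<le> cmod s + cmod (s - w)"
      by (metis norm_minus_commute norm_triangle_sub)
    ultimately have "R \<le> cmod s"
      using s by linarith
    note bounds = R[OF this]
    let ?lead = "poly (P m) s" and ?rest = "\<lambda>k. poly (P k) s * ((s - w) ^ (m - k) / fact (m - k))"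
    have "?lead = - (\<Sum>k<m. ?rest k)"
      using root by (simp add: lessThan_Suc_atMost [symmetric] poly_sum poly_divided_power eq_neg_iff_add_eq_0 add.commute)
    then have "cmod ?lead \<le> (\<Sum>k<m. cmod (?rest k))"
      by (simp add: norm_sum)
    also have "\<dots> \<le> (\<Sum>k<m. e * cmod ?lead * (\<bar>C\<bar> ^ (m - k) / fact (m - k)))"
    proof (intro sum_mono)
      fix k assume "k \<in> {..<m}"
      moreover have "cmod (s - w) ^ (m - k) \<le> \<bar>C\<bar> ^ (m - k)"
        using s by (intro power_mono) auto
      ultimately show "cmod (?rest k) \<le> e * cmod ?lead * (\<bar>C\<bar> ^ (m - k) / fact (m - k))"
        using bounds \<open>e > 0\<close>
        by (auto simp: norm_mult norm_divide norm_power intro!: mult_mono divide_right_mono)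
    qed
    also have "\<dots> = (e * B) * cmod ?lead"
      by (simp add: B_def sum_distrib_left mult_ac)
    also have "\<dots> < cmod ?lead"
      using \<open>e * B < 1\<close> bounds by simp
    finally show False
      by simp
  qed
  then show ?thesis
    using that by blast
qed

lemma least_index_of_max_degree:
  fixes Q :: "nat \<Rightarrow> 'a::zero poly"
  assumes "\<exists>k\<le>n. Q k \<noteq> 0"
  obtains m where "m \<le> n" "Q m \<noteq> 0" "\<forall>k\<le>n. degree (Q k) \<le> degree (Q m)"
    "\<forall>k<m. degree (Q k) < degree (Q m) \<or> Q k = 0"
proof -
  define K where "K = Max (degree ` Q ` {..n})"
  have le_K: "degree (Q k) \<le> K" if "k \<le> n" for k
    unfolding K_def using that by (intro Max_ge) auto
  have "K \<in> degree ` Q ` {..n}"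
    unfolding K_def by (intro Max_in) auto
  then obtain k1 where k1: "k1 \<le> n" "degree (Q k1) = K"
    by auto
  have ex: "\<exists>k. k \<le> n \<and> Q k \<noteq> 0 \<and> degree (Q k) = K"
  proof (cases "Q k1 = 0")
    case True
    with k1 assms le_K show ?thesis
      by fastforce
  qed (use k1 in blast)
  define m where "m = (LEAST k. k \<le> n \<and> Q k \<noteq> 0 \<and> degree (Q k) = K)"
  have m: "m \<le> n" "Q m \<noteq> 0" "degree (Q m) = K"
    using LeastI_ex[OF ex] unfolding m_def by auto
  have "degree (Q k) < degree (Q m) \<or> Q k = 0" if "k < m" for k
    using not_less_Least[OF that[unfolded m_def]] le_K[of k] that m by fastforce
  with m le_K show ?thesis
    by (intro that) auto
qed

lemma degree_sum_mult_phi: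
  assumes "P 0 \<noteq> 0" and "\<And>k. k \<le> n \<Longrightarrow> degree (P k) \<le> degree (P 0)"
  shows "degree (\<Sum>k\<le>n. P k * phi (n - k)) = degree (P 0) + n"
proof (rule antisym)
  have "degree (P k * phi (n - k)) \<le> degree (P 0) + n" if "k \<le> n" for k
    using degree_mult_le[of "P k" "phi (n - k)"] assms(2)[OF that] that
    by (simp add: phi_eq_divided_power degree_divided_power)
  then show "degree (\<Sum>k\<le>n. P k * phi (n - k)) \<le> degree (P 0) + n"
    by (intro degree_sum_le) auto
next
  have "coeff (P k * phi (n - k)) (degree (P 0) + n) = (if k = 0 then lead_coeff (P 0) / fact n else 0)"
    if "k \<le> n" for k
  proof -
    have "coeff (P k * phi (n - k)) (degree (P 0) + n) = coeff (P k) (degree (P 0) + k) / fact (n - k)"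
      using that by (simp add: phi_def mult.commute[of "P k"] coeff_monom_mult)
    also have "\<dots> = (if k = 0 then lead_coeff (P 0) / fact n else 0)"
      using assms(2)[OF that] by (auto intro: coeff_eq_0)
    finally show ?thesis .
  qed
  then have "coeff (\<Sum>k\<le>n. P k * phi (n - k)) (degree (P 0) + n) = lead_coeff (P 0) / fact n"
    by (simp add: coeff_sum)
  then show "degree (P 0) + n \<le> degree (\<Sum>k\<le>n. P k * phi (n - k))"
    using assms(1) by (intro le_degree) simp
qed

lemma root_near_divided_power:
  assumes near: "\<forall>f\<in>Pn n. degree f \<ge> 1 \<longrightarrow> (\<exists>u\<in>Zset f. \<exists>v\<in>Zset (T f). cmod (u - v) \<le> C)"
    and "1 \<le> m" "m \<le> n"
  obtains v where "poly (T (divided_power w m)) v = 0" "cmod (w - v) \<le> C"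
proof -
  have "divided_power w m \<in> Pn n" "degree (divided_power w m) \<ge> 1"
    using assms(2,3) by (simp_all add: Pn_def degree_divided_power)
  with near have "\<exists>u\<in>Zset (divided_power w m). \<exists>v\<in>Zset (T (divided_power w m)). cmod (u - v) \<le> C"
    by blast
  then obtain v where "v \<in> Zset (T (divided_power w m))" "cmod (w - v) \<le> C"
    unfolding Zset_divided_power[OF assms(2)] by blast
  then show ?thesis
    by (intro that) (auto simp: Zset_def split: if_splits)
qed

lemma least_dominant_diff_coeff_index_eq_0:
  assumes T: "lin_op_Pn n T"
    and near: "\<forall>f\<in>Pn n. degree f \<ge> 1 \<longrightarrow> (\<exists>u\<in>Zset f. \<exists>v\<in>Zset (T f). cmod (u - v) \<le> C)"
    and m: "m \<le> n" "diff_coeff T m \<noteq> 0"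
    and lower: "\<forall>k<m. degree (diff_coeff T k) < degree (diff_coeff T m) \<or> diff_coeff T k = 0"
  shows "m = 0"
proof (rule ccontr)
  assume "m \<noteq> 0"
  then have "1 \<le> m"
    by simp
  have T_shift: "T (divided_power w m) = (\<Sum>k\<le>m. diff_coeff T k * divided_power w (m - k))" for w
    using lin_op_Pn_eq_diff_op[OF T, of "divided_power w m"] sum_mult_higher_pderiv_divided_power[OF m(1)] m(1)
    by (simp add: Pn_def degree_divided_power)
  obtain w where w: "\<forall>s. cmod (s - w) \<le> C \<longrightarrow> poly (T (divided_power w m)) s \<noteq> 0"
    unfolding T_shift by (rule exists_root_free_disc[OF m(2) lower])
  obtain v where "poly (T (divided_power w m)) v = 0" "cmod (w - v) \<le> C"
    by (rule root_near_divided_power[OF near \<open>1 \<le> m\<close> m(1)])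
  with w show False
    by (simp add: norm_minus_commute)
qed

theorem mainTheorem10:
  fixes n :: nat and T :: "complex poly \<Rightarrow> complex poly" and C :: real
  assumes "n \<ge> 1"
    and "lin_op_Pn n T"
    and "\<exists>p\<in>Pn n. T p \<noteq> 0"
    and "C > 0"
    and "\<forall>f\<in>Pn n. degree f \<ge> 1 \<longrightarrow>
           (\<exists>u\<in>Zset f. \<exists>v\<in>Zset (T f). cmod (u - v) \<le> C)"
  shows "(\<forall>p\<in>Pn n. T p = (\<Sum>k\<le>n. smult (poly (T (phi k)) 0) ((pderiv ^^ k) p)))
         \<and> poly (T (phi 0)) 0 \<noteq> 0"
proof -
  define Q where "Q = diff_coeff T"
  have T_eq: "T p = (\<Sum>k\<le>n. Q k * (pderiv ^^ k) p)" if "p \<in> Pn n" for p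
    unfolding Q_def using lin_op_Pn_eq_diff_op[OF assms(2) that] .
  have "\<exists>k\<le>n. Q k \<noteq> 0"
  proof (rule ccontr)
    assume "\<not> (\<exists>k\<le>n. Q k \<noteq> 0)"
    then have "T p = 0" if "p \<in> Pn n" for p
      using T_eq[OF that] by simp
    with assms(3) show False
      by blast
  qed
  then obtain m where m: "m \<le> n" "Q m \<noteq> 0" "\<forall>k\<le>n. degree (Q k) \<le> degree (Q m)"
    and lower: "\<forall>k<m. degree (Q k) < degree (Q m) \<or> Q k = 0"
    by (rule least_index_of_max_degree)
  have "m = 0"
    using least_dominant_diff_coeff_index_eq_0[OF assms(2,5)] m lower unfolding Q_def by blast
  have "degree (Q 0) + n = degree (T (phi n))"
    using degree_sum_mult_phi[of Q n] m \<open>m = 0\<close> sum_diff_coeff_mult_phi[of T n]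
    unfolding Q_def by simp
  moreover have "degree (T (phi n)) \<le> n"
    using assms(2) by (simp add: lin_op_Pn_def Pn_def phi_eq_divided_power degree_divided_power)
  ultimately have "degree (Q k) = 0" if "k \<le> n" for k
    using m(3) \<open>m = 0\<close> that by fastforce
  then have Q_const: "Q k = [:poly (T (phi k)) 0:]" if "k \<le> n" for k
    using degree_0_id[of "Q k"] poly_diff_coeff_0[of T k] that
    by (simp add: Q_def poly_0_coeff_0)
  with T_eq m(2) \<open>m = 0\<close> show ?thesis
    by auto
qed

end
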